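(* Let $\tau\in\mathscr C^r(\mathbb{S}^1,\mathbb{R})$, fix $R>\|\tau'\|_\infty$ and $\rho>0$. Let $I_j=(a_j,b_j)$, $1\le j\le J$, be open intervals covering $[\log\lambda,\log\Lambda]$ with $b_j-a_j<\rho/3$; let $N=\lceil 6\rho^{-1}\log\lceil2\Lambda\rceil\rceil$; and let $q$ be a positive integer with $(q+1)N e^{-q\rho/2}<1/(4J)$ and $\ell^q\ge 2(q+1)N$. If $\mathcal N(\tau)\ge e^\rho$, then for infinitely many $n\ge q$ there exist a point $z_0=(x,s)\in\mathbb{T}^2$, a unit vector $v_0\in\mathbb{R}^2$, an integer $1\le j\le J$, a subset $B\subset\mathcal A^q$ with $\#B=2(q+1)N$, and for each $\beta\in B$ a subset $\Sigma(\beta)\subset\mathcal A^n$ with $\#\Sigma(\beta)\ge e^{\rho n}\ell^{-q}/(2J)$, such that for every $\beta\in B$ and every $\alpha\in\Sigma(\beta)$: $[\alpha]_q=\beta$, $v_0\in Df^n(x_\alpha)\mathscr K_R$, and $(E^n)'(x_\alpha)\in[e^{a_j n},e^{b_j n}]$.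
   Context: $\mathbb{S}^1=\mathbb{R}/\mathbb{Z}$, $\mathbb{T}^2=\mathbb{S}^1\times\mathbb{S}^1$, $r\ge2$. $E:\mathbb{S}^1\to\mathbb{S}^1$ is a $\mathscr C^r$ expanding map of degree $\ell\ge2$ with $1<\lambda\le E'(x)\le\Lambda$ for all $x$, and $0$ is a fixed point of $E$. For $\tau\in\mathscr C^r(\mathbb{S}^1,\mathbb{R})$, $f(x,s)=(E(x),s+\tau(x)\bmod1)$; $Df(x,s)=\begin{pmatrix}E'(x)&0\\ \tau'(x)&1\end{pmatrix}$ depends only on $x$, and $Df^n(y)$ denotes $Df^n(y,s)$ for any $s$. For $R>0$, $\vartheta_R=R/(\lambda-1)$, $\mathscr K_R=\{(\xi,\eta):|\eta|\le\vartheta_R|\xi|\}$; for $R>\|\tau'\|_\infty$, $\mathcal N(\tau,R;n)=\sup_{z}\sup_{v}\#\{\zeta\in f^{-n}(z):v\in Df^n(\zeta)\mathscr K_R\}$ (sup over $z\in\mathbb{T}^2$ and unit vectors $v$) and $\mathcal N(\tau)=\lim_n\mathcal N(\tau,R;n)^{1/n}$ (exists, independent of $R$). Symbolic coding: $\mathcal A=\{0,\dots,\ell-1\}$; the $\ell$ points of $E^{-1}(0)$ divide $\mathbb{S}^1$ into half-open intervals $\mathcal I(j)$, $j\in\mathcal A$, each mapped bijectively onto $\mathbb{S}^1$ by $E$. For $\alpha=(\alpha_n,\dots,\alpha_1)\in\mathcal A^n$, $\mathcal I(\alpha)=\bigcap_{i=0}^{n-1}E^{-i}(\mathcal I(\alpha_{n-i}))$,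 which $E^n$ maps bijectively onto $\mathbb{S}^1$; for $x\in\mathbb{S}^1$, $x_\alpha$ is the unique point of $\mathcal I(\alpha)$ with $E^n(x_\alpha)=x$. For $1\le p\le n$, $[\alpha]_p=(\alpha_p,\dots,\alpha_1)\in\mathcal A^p$. *)

theory Defs
  imports "HOL-Analysis.Analysis"
begin

text \<open>The circle S^1 = R/Z is represented by the points of [0,1);
 a circle map E is given by a lift F : R -> R with F(x+1) = F(x) + deg, and
 E(y) = frac (F y). Functions on S^1 are 1-periodic functions R -> R.
 The torus T^2 is [0,1) x [0,1). Vectors of R^2 are pairs real x real.\<close>

definition C_k :: "nat \<Rightarrow> (real \<Rightarrow> real) \<Rightarrow> bool" where
  "C_k k g \<longleftrightarrow> (\<exists>D :: nat \<Rightarrow> real \<Rightarrow> real. D 0 = g \<and>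
     (\<forall>i<k. \<forall>x. (D i has_real_derivative D (Suc i) x) (at x)) \<and>
     (\<forall>i\<le>k. continuous_on UNIV (D i)))"

definition circle :: "real set" where
  "circle = {0..<1}"

definition torus :: "(real \<times> real) set" where
  "torus = circle \<times> circle"

definition Ecirc :: "(real \<Rightarrow> real) \<Rightarrow> real \<Rightarrow> real" where
  "Ecirc F y = frac (F y)"

definition fskew :: "(real \<Rightarrow> real) \<Rightarrow> (real \<Rightarrow> real) \<Rightarrow> real \<times> real \<Rightarrow> real \<times> real" where
  "fskew F \<tau> z = (Ecirc F (fst z), frac (snd z + \<tau> (fst z)))"

definition Df :: "(real \<Rightarrow> real) \<Rightarrow> (real \<Rightarrow> real) \<Rightarrow> real \<Rightarrow> real \<times> real \<Rightarrow> real \<times> real" where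
  "Df F \<tau> x w = (deriv F x * fst w, deriv \<tau> x * fst w + snd w)"

fun Dfn :: "(real \<Rightarrow> real) \<Rightarrow> (real \<Rightarrow> real) \<Rightarrow> nat \<Rightarrow> real \<Rightarrow> real \<times> real \<Rightarrow> real \<times> real" where
  "Dfn F \<tau> 0 x w = w"
| "Dfn F \<tau> (Suc n) x w = Dfn F \<tau> n (Ecirc F x) (Df F \<tau> x w)"

definition cone :: "real \<Rightarrow> real \<Rightarrow> (real \<times> real) set" where
  "cone lam R = {w. \<bar>snd w\<bar> \<le> (R / (lam - 1)) * \<bar>fst w\<bar>}"

definition cone_image :: "(real \<Rightarrow> real) \<Rightarrow> (real \<Rightarrow> real) \<Rightarrow> real \<Rightarrow> real \<Rightarrow> nat \<Rightarrow> real \<Rightarrow> (real \<times> real) set" where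
  "cone_image F \<tau> lam R n y = Dfn F \<tau> n y ` cone lam R"

definition Ncount :: "(real \<Rightarrow> real) \<Rightarrow> (real \<Rightarrow> real) \<Rightarrow> real \<Rightarrow> real \<Rightarrow> nat \<Rightarrow> real" where
  "Ncount F \<tau> lam R n = Sup {real (card {\<zeta> \<in> torus. (fskew F \<tau> ^^ n) \<zeta> = z \<and>
        v \<in> cone_image F \<tau> lam R n (fst \<zeta>)}) | z v. z \<in> torus \<and> norm v = 1}"

definition Ntau :: "(real \<Rightarrow> real) \<Rightarrow> (real \<Rightarrow> real) \<Rightarrow> real \<Rightarrow> real \<Rightarrow> real" where
  "Ntau F \<tau> lam R = lim (\<lambda>n. Ncount F \<tau> lam R n powr (1 / real n))"

text \<open>Symbolic coding. The preimages of 0 under E in [0,1) are the points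
 F^{-1}(k), k = 0..deg-1; I(j) = [F^{-1}(j), F^{-1}(j+1)).\<close>
definition Icyl :: "(real \<Rightarrow> real) \<Rightarrow> nat \<Rightarrow> real set" where
  "Icyl F j = {y \<in> circle. real j \<le> F y \<and> F y < real j + 1}"

text \<open>Words alpha = (alpha_n, ..., alpha_1) in A^n, as functions on {1..n}.\<close>
definition words :: "nat \<Rightarrow> nat \<Rightarrow> (nat \<Rightarrow> nat) set" where
  "words deg n = PiE {1..n} (\<lambda>_. {..<deg})"

definition Iword :: "(real \<Rightarrow> real) \<Rightarrow> nat \<Rightarrow> (nat \<Rightarrow> nat) \<Rightarrow> real set" where
  "Iword F n \<alpha> = {y \<in> circle. \<forall>i<n. (Ecirc F ^^ i) y \<in> Icyl F (\<alpha> (n - i))}"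

definition xword :: "(real \<Rightarrow> real) \<Rightarrow> nat \<Rightarrow> (nat \<Rightarrow> nat) \<Rightarrow> real \<Rightarrow> real" where
  "xword F n \<alpha> x = (THE y. y \<in> Iword F n \<alpha> \<and> (Ecirc F ^^ n) y = x)"

definition trunc :: "nat \<Rightarrow> (nat \<Rightarrow> nat) \<Rightarrow> (nat \<Rightarrow> nat)" where
  "trunc p \<alpha> = restrict \<alpha> {1..p}"

end

theory Submission
  imports Defs
begin

text \<open>
  Write c(n) = N(tau,R;n). It is submultiplicative: a cone preimage of length m + n factors
  through a cone preimage of length n, and, since the cone is forward invariant and Df^n is
  injective, the preimages of length m + n lying over one point of the intermediate level form
  a cone preimage of length m for a single renormalised vector. Fekete's lemma then gives
  c(n) >= e^(rho n) for every n, so c(n) > e^(q rho/2) c(n - q) for infinitely many n: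
  otherwise c would grow only like e^(rho n/2).

  For such an n take (x, v0) attaining c(n). The words alpha with v0 in Df^n(x_alpha) K_R are
  sorted by the interval I_j containing (1/n) log (E^n)'(x_alpha); some class j holds at least
  c(n)/J of them. For each prefix beta of length q at most c(n - q) of these words start with
  beta, while the prefixes carrying fewer than e^(rho n) l^(-q)/(2J) words account for at most
  half of the class. Hence more than 2(q+1)N prefixes carry many words.
\<close>

lemma subadditive_iterate:
  fixes b :: "nat \<Rightarrow> real"
  assumes subadd: "\<And>m n. b (m + n) \<le> b m + b n"
  shows "b (i * k + r) \<le> real i * b k + b r"
proof (induction i)
  case 0
  then show ?case by simp
next
  case (Suc i)
  have "b (Suc i * k + r) = b (k + (i * k + r))"
    by (simp add: algebra_simps)
  also have "\<dots> \<le> b k + b (i * k + r)"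
    by (rule subadd)
  finally show ?case
    using Suc by (simp add: algebra_simps)
qed

lemma fekete_subadditive:
  fixes b :: "nat \<Rightarrow> real"
  assumes nonneg: "\<And>n. 0 \<le> b n" and subadd: "\<And>m n. b (m + n) \<le> b m + b n"
  defines "L \<equiv> Inf ((\<lambda>n. b n / real n) ` {1..})"
  shows "(\<lambda>n. b n / real n) \<longlonglongrightarrow> L" and "\<And>n. n \<ge> 1 \<Longrightarrow> L \<le> b n / real n"
proof -
  have bdd: "bdd_below ((\<lambda>n. b n / real n) ` {1..})"
    by (rule bdd_belowI[of _ 0]) (use nonneg in auto)
  show lower: "\<And>n. n \<ge> 1 \<Longrightarrow> L \<le> b n / real n"
    unfolding L_def by (rule cInf_lower[OF _ bdd]) auto
  show "(\<lambda>n. b n / real n) \<longlonglongrightarrow> L"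
  proof (rule LIMSEQ_I)
    fix e :: real
    assume e: "e > 0"
    obtain k where k: "k \<ge> 1" "b k / real k < L + e / 2"
      using cInf_lessD[of "(\<lambda>n. b n / real n) ` {1..}" "L + e / 2"] e unfolding L_def by fastforce
    define C where "C = (\<Sum>r<k. b r)"
    have C: "b r \<le> C" if "r < k" for r
      unfolding C_def using that nonneg by (intro member_le_sum) auto
    obtain N0 :: nat where N0: "N0 > 2 * C / e"
      using reals_Archimedean2 by blast
    show "\<exists>no. \<forall>n\<ge>no. norm (b n / real n - L) < e"
    proof (intro exI[of _ "Suc N0"] allI impI)
      fix n
      assume n: "n \<ge> Suc N0"
      then have n_pos: "real n > 0"
        by simp
      have "b n \<le> real (n div k) * b k + b (n mod k)"
        using subadditive_iterate[OF subadd, of "n div k" k "n mod k"] by simp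
      also have "real (n div k) * b k = real (n div k * k) * (b k / real k)"
        using k by simp
      also have "\<dots> \<le> real n * (b k / real k)"
      proof (rule mult_right_mono)
        show "real (n div k * k) \<le> real n"
          by (simp only: of_nat_le_iff div_times_less_eq_dividend)
        show "0 \<le> b k / real k"
          using nonneg[of k] by simp
      qed
      also have "b (n mod k) \<le> C"
        using C k by simp
      finally have "b n / real n \<le> b k / real k + C / real n"
        using n_pos by (simp add: field_simps)
      moreover have "C / real n < e / 2"
      proof -
        have "2 * C < e * real N0"
          using N0 e by (simp add: field_simps)
        also have "\<dots> \<le> e * real n"
          using n e by (intro mult_left_mono) auto
        finally show ?thesis
          using n_pos by (simp add: field_simps)
      qed
      ultimately have "b n / real n - L < e"
        using k(2) by linarith
      then show "norm (b n / real n - L) < e"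
        using lower[of n] n by simp
    qed
  qed
qed

lemma submultiplicative_exp_lower_bound:
  fixes a :: "nat \<Rightarrow> real"
  assumes ge1: "\<And>n. a n \<ge> 1" and submult: "\<And>m n. a (m + n) \<le> a m * a n"
    and lim: "lim (\<lambda>n. a n powr (1 / real n)) \<ge> exp \<rho>" and n: "n \<ge> 1"
  shows "exp (\<rho> * real n) \<le> a n"
proof -
  define b where "b n = ln (a n)" for n
  have a_pos: "a n > 0" for n
    using ge1[of n] by linarith
  have subadd: "b (m + n) \<le> b m + b n" for m n
  proof -
    have "ln (a (m + n)) \<le> ln (a m * a n)"
      using submult[of m n] a_pos by simp
    then show ?thesis
      unfolding b_def using a_pos[of m] a_pos[of n] by (simp add: ln_mult)
  qed
  define L where "L = Inf ((\<lambda>n. b n / real n) ` {1..})"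
  note fekete = fekete_subadditive[of b, OF _ subadd, folded L_def]
  have b_nonneg: "0 \<le> b n" for n
    unfolding b_def using ge1[of n] by simp
  have "(\<lambda>n. exp (b n / real n)) \<longlonglongrightarrow> exp L"
    by (rule tendsto_exp[OF fekete(1)[OF b_nonneg]])
  moreover have "exp (b n / real n) = a n powr (1 / real n)" for n
    using a_pos[of n] unfolding b_def powr_def by simp
  ultimately have "(\<lambda>n. a n powr (1 / real n)) \<longlonglongrightarrow> exp L"
    by simp
  then have "\<rho> \<le> L"
    using lim limI by fastforce
  also have "L \<le> b n / real n"
    by (rule fekete(2)[OF b_nonneg n])
  finally have "\<rho> * real n \<le> ln (a n)"
    using n unfolding b_def by (simp add: field_simps)
  then show ?thesis
    using a_pos[of n] by (metis exp_le_cancel_iff exp_ln)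
qed

lemma exp_growth_frequent_jumps:
  fixes a :: "nat \<Rightarrow> real" and \<rho> :: real
  assumes q: "q > 0" and \<rho>: "\<rho> > 0"
    and lower: "\<And>n. n \<ge> 1 \<Longrightarrow> exp (\<rho> * real n) \<le> a n"
  shows "\<exists>n\<ge>m. exp (real q * \<rho> / 2) * a (n - q) < a n"
proof (rule ccontr)
  define K where "K = exp (real q * \<rho> / 2)"
  define n1 where "n1 = max m 1"
  assume "\<not> ?thesis"
  then have no_jump: "a n \<le> K * a (n - q)" if "n \<ge> m" for n
    using that unfolding K_def by (meson not_less)
  have K: "K > 1"
    unfolding K_def using q \<rho> by simp
  have iterate: "a (n1 + i * q) \<le> K ^ i * a n1" for i
  proof (induction i)
    case 0
    then show ?case by simp
  next
    case (Suc i)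
    have "a (n1 + Suc i * q) \<le> K * a (n1 + i * q)"
      using no_jump[of "n1 + Suc i * q"] unfolding n1_def by simp
    also have "\<dots> \<le> K * (K ^ i * a n1)"
      using Suc K by (intro mult_left_mono) auto
    finally show ?case
      by (simp add: mult.assoc)
  qed
  obtain i where i: "a n1 < K ^ i"
    using real_arch_pow[OF K] by blast
  have "K ^ i * K ^ i = exp (\<rho> * real (i * q))"
    unfolding K_def exp_of_nat_mult[symmetric] exp_add[symmetric] by (simp add: algebra_simps)
  also have "\<dots> \<le> exp (\<rho> * real (n1 + i * q))"
    using \<rho> by simp
  also have "\<dots> \<le> a (n1 + i * q)"
    by (rule lower) (simp add: n1_def)
  also have "\<dots> \<le> K ^ i * a n1"
    by (rule iterate)
  finally have "K ^ i \<le> a n1"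
    using K by simp
  then show False
    using i by simp
qed

lemma exists_ge_average:
  fixes f :: "'a \<Rightarrow> real"
  assumes "finite I" "I \<noteq> {}" "c \<le> sum f I"
  shows "\<exists>i\<in>I. c / real (card I) \<le> f i"
proof (rule ccontr)
  assume "\<not> ?thesis"
  then have "sum f I < real (card I) * (c / real (card I))"
    using sum_bounded_above_strict[of I f "c / real (card I)"] assms(1,2)
    by (simp add: card_gt_0_iff not_le)
  then show False
    using assms by simp
qed

lemma sum_le_card_large_values:
  fixes f :: "'a \<Rightarrow> real"
  assumes W: "finite W" and le_M: "\<And>w. w \<in> W \<Longrightarrow> f w \<le> M" and T: "0 \<le> T"
  shows "sum f W \<le> real (card {w \<in> W. T \<le> f w}) * M + real (card W) * T"
proof -
  let ?B = "{w \<in> W. T \<le> f w}"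
  have split: "sum f W = sum f ?B + sum f (W - ?B)"
    using sum.subset_diff[of ?B W f] W by (simp add: add.commute)
  have "sum f ?B \<le> real (card ?B) * M"
    using sum_bounded_above[of ?B f M] le_M by auto
  moreover have "sum f (W - ?B) \<le> real (card (W - ?B)) * T"
    using sum_bounded_above[of "W - ?B" f T] by force
  moreover have "real (card (W - ?B)) * T \<le> real (card W) * T"
    using W T by (intro mult_right_mono) (auto intro: card_mono)
  ultimately show ?thesis
    using split by linarith
qed

lemma many_large_values:
  fixes f :: "'a \<Rightarrow> real"
  assumes W: "finite W" and le_M: "\<And>w. w \<in> W \<Longrightarrow> f w \<le> M" and M: "0 \<le> M" and T: "0 \<le> T"
    and total: "s \<le> sum f W" and small: "real (card W) * T \<le> s / 2"
    and large: "2 * real k * M < s"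
  shows "k < card {w \<in> W. T \<le> f w}"
proof -
  have "s / 2 \<le> real (card {w \<in> W. T \<le> f w}) * M"
    using sum_le_card_large_values[of W f M T, OF W le_M T] total small by linarith
  then have "real k * M < real (card {w \<in> W. T \<le> f w}) * M"
    using large by linarith
  then have "real k < real (card {w \<in> W. T \<le> f w})"
    using M by (rule mult_right_less_imp_less)
  then show ?thesis
    by simp
qed

lemma card_le_sum_card_fibres:
  assumes B: "finite B" and g: "\<And>a. a \<in> A \<Longrightarrow> g a \<in> B"
  shows "real (card A) \<le> (\<Sum>b\<in>B. real (card {a \<in> A. g a = b}))"
proof (cases "finite A")
  case True
  have "A \<subseteq> (\<Union>b\<in>B. {a \<in> A. g a = b})"
    using g by blast
  then have "card A \<le> card (\<Union>b\<in>B. {a \<in> A. g a = b})"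
    using True B by (intro card_mono) auto
  also have "\<dots> \<le> (\<Sum>b\<in>B. card {a \<in> A. g a = b})"
    by (rule card_UN_le[OF B])
  finally show ?thesis
    by (simp only: of_nat_sum[symmetric] of_nat_le_iff)
qed (simp add: sum_nonneg)

lemma C_k_has_real_derivative:
  assumes "C_k r g" "r \<ge> 1"
  shows "(g has_real_derivative deriv g x) (at x)" and "continuous_on UNIV (deriv g)"
proof -
  obtain D where D: "D 0 = g" "\<forall>i<r. \<forall>x. (D i has_real_derivative D (Suc i) x) (at x)"
    "\<forall>i\<le>r. continuous_on UNIV (D i)"
    using assms(1) unfolding C_k_def by blast
  have D1: "(g has_real_derivative D 1 x) (at x)" for x
    using D(1,2) assms(2) by fastforce
  then have "deriv g = D 1"
    using DERIV_imp_deriv by blast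
  then show "(g has_real_derivative deriv g x) (at x)" and "continuous_on UNIV (deriv g)"
    using D1 D(3) assms(2) by auto
qed

lemma periodic_continuous_bdd_above:
  fixes g :: "real \<Rightarrow> real"
  assumes cont: "continuous_on UNIV g" and per: "\<And>x. g (x + 1) = g x"
  shows "bdd_above (range (\<lambda>x. \<bar>g x\<bar>))"
proof -
  have shift: "g (y + real n) = g y" for y n
  proof (induction n)
    case 0
    then show ?case by simp
  next
    case (Suc n)
    have "g (y + real (Suc n)) = g ((y + real n) + 1)"
      by (simp add: algebra_simps)
    then show ?case
      using per Suc by simp
  qed
  have g_frac: "g x = g (frac x)" for x
  proof (cases "\<lfloor>x\<rfloor> \<ge> 0")
    case True
    then have "x = frac x + real (nat \<lfloor>x\<rfloor>)"
      by (simp add: frac_def)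
    then show ?thesis
      using shift[of "frac x" "nat \<lfloor>x\<rfloor>"] by simp
  next
    case False
    then have "frac x = x + real (nat (- \<lfloor>x\<rfloor>))"
      by (simp add: frac_def)
    then show ?thesis
      using shift[of x "nat (- \<lfloor>x\<rfloor>)"] by simp
  qed
  have "compact (g ` {0..1})"
    by (rule compact_continuous_image) (use cont continuous_on_subset in auto)
  then obtain B where B: "\<forall>y\<in>g ` {0..1}. norm y \<le> B"
    using compact_imp_bounded bounded_iff by metis
  have "\<bar>g x\<bar> \<le> B" for x
  proof -
    have "frac x \<in> {0..1}"
      using frac_lt_1[of x] by auto
    then show ?thesis
      using B g_frac[of x] by auto
  qed
  then show ?thesis
    by (intro bdd_aboveI[of _ B]) auto
qed

lemma periodic_C_k_abs_deriv_le_SUP: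
  assumes "C_k r g" "r \<ge> 1" and per: "\<And>x. g (x + 1) = g x"
  shows "\<bar>deriv g x\<bar> \<le> (SUP y. \<bar>deriv g y\<bar>)"
proof -
  note g' = C_k_has_real_derivative[OF assms(1,2)]
  have "deriv g (y + 1) = deriv g y" for y
  proof -
    have "((\<lambda>y. g (y + 1)) has_real_derivative deriv g (y + 1)) (at y)"
      using g'(1)[of "y + 1"] DERIV_shift by blast
    then show ?thesis
      using per g'(1)[of y] DERIV_unique by simp
  qed
  then have "bdd_above (range (\<lambda>y. \<bar>deriv g y\<bar>))"
    by (rule periodic_continuous_bdd_above[OF g'(2)])
  then show ?thesis
    by (rule cSUP_upper[rotated]) simp
qed

locale expanding_skew =
  fixes F \<tau> :: "real \<Rightarrow> real" and deg :: nat and lam \<Lambda> R :: real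
  assumes deg_pos: "deg \<ge> 1"
    and F_deriv: "\<And>x. (F has_real_derivative deriv F x) (at x)"
    and F_lift: "\<And>x. F (x + 1) = F x + real deg"
    and F_fix: "F 0 = 0"
    and lam: "1 < lam"
    and F_expanding: "\<And>x. lam \<le> deriv F x \<and> deriv F x \<le> \<Lambda>"
    and tau_deriv_bound: "\<And>x. \<bar>deriv \<tau> x\<bar> \<le> R"
begin

abbreviation "E \<equiv> Ecirc F"

lemma F_less: "x < y \<Longrightarrow> F x < F y"
proof -
  assume "x < y"
  have "\<And>t. \<exists>d. (F has_real_derivative d) (at t) \<and> 0 < d"
    using F_deriv F_expanding lam by (meson less_le_trans less_trans zero_less_one)
  then show ?thesis
    using DERIV_pos_imp_increasing[OF \<open>x < y\<close>, of F] by blast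
qed

lemma F_inj: "F x = F y \<Longrightarrow> x = y"
  using F_less by (metis linorder_neqE_linordered_idom order_less_irrefl)

lemma F_one: "F 1 = real deg"
  using F_lift[of 0] F_fix by simp

lemma F_range: "y \<in> circle \<Longrightarrow> 0 \<le> F y \<and> F y < real deg"
  unfolding circle_def using F_less[of 0 y] F_less[of y 1] F_fix F_one
  by (cases "y = 0") auto

lemma Ecirc_in_circle: "E y \<in> circle"
  unfolding Ecirc_def circle_def by (simp add: frac_lt_1)

lemma funpow_Ecirc_in_circle: "y \<in> circle \<Longrightarrow> (E ^^ n) y \<in> circle"
  by (induction n) (auto simp: Ecirc_in_circle)

lemma funpow_Ecirc_add: "(E ^^ (m + n)) y = (E ^^ n) ((E ^^ m) y)"
  by (simp add: funpow_add add.commute[of m n])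

subsection \<open>Symbolic coding\<close>

definition digit :: "real \<Rightarrow> nat" where
  "digit y = nat \<lfloor>F y\<rfloor>"

lemma digit_Icyl: "y \<in> circle \<Longrightarrow> y \<in> Icyl F (digit y) \<and> digit y < deg"
  using F_range[of y] unfolding Icyl_def digit_def by (auto simp: floor_less_iff) linarith+

lemma Icyl_digit:
  assumes "y \<in> Icyl F j"
  shows "j = digit y"
proof -
  have "\<lfloor>F y\<rfloor> = int j"
    using assms unfolding Icyl_def by (simp add: floor_eq_iff)
  then show ?thesis
    unfolding digit_def by simp
qed

lemma Ecirc_Icyl: "y \<in> Icyl F j \<Longrightarrow> E y = F y - real j"
  unfolding Icyl_def Ecirc_def by (simp add: frac_unique_iff)

lemma Icyl_inj: "y1 \<in> Icyl F j \<Longrightarrow> y2 \<in> Icyl F j \<Longrightarrow> E y1 = E y2 \<Longrightarrow> y1 = y2"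
  using Ecirc_Icyl F_inj by force

lemma Icyl_circle: "y \<in> Icyl F j \<Longrightarrow> y \<in> circle"
  unfolding Icyl_def by auto

lemma Icyl_surj:
  assumes w: "w \<in> circle" and j: "j < deg"
  shows "\<exists>y \<in> Icyl F j. E y = w"
proof -
  have w01: "0 \<le> w" "w < 1"
    using w unfolding circle_def by auto
  have jd: "real j + 1 \<le> real deg"
    using j by linarith
  have "F 0 \<le> w + j" "w + j \<le> F 1"
    using F_fix F_one w01 jd by auto
  from IVT'[OF this _ continuous_on_subset[OF DERIV_continuous_on[OF F_deriv]]]
  obtain y where y: "0 \<le> y" "y \<le> 1" "F y = w + j"
    by auto
  have "y \<noteq> 1"
    using y F_one w01 jd by auto
  then have "y \<in> Icyl F j"
    using y w01 unfolding Icyl_def circle_def by auto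
  moreover have "E y = w"
    using Ecirc_Icyl[OF \<open>y \<in> Icyl F j\<close>] y(3) by simp
  ultimately show ?thesis
    by blast
qed

lemma Iword_circle: "y \<in> Iword F n \<alpha> \<Longrightarrow> y \<in> circle"
  unfolding Iword_def by auto

lemma Iword_Suc: "y \<in> Iword F (Suc n) \<alpha> \<longleftrightarrow> y \<in> Icyl F (\<alpha> (Suc n)) \<and> E y \<in> Iword F n \<alpha>"
proof -
  have "(\<forall>i<Suc n. (E ^^ i) y \<in> Icyl F (\<alpha> (Suc n - i))) \<longleftrightarrow>
      y \<in> Icyl F (\<alpha> (Suc n)) \<and> (\<forall>i<n. (E ^^ i) (E y) \<in> Icyl F (\<alpha> (n - i)))"
    by (simp add: All_less_Suc2 funpow_Suc_right del: funpow.simps)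
  then show ?thesis
    unfolding Iword_def using Ecirc_in_circle Icyl_circle by blast
qed

lemma Iword_unique:
  "y1 \<in> Iword F n \<alpha> \<Longrightarrow> y2 \<in> Iword F n \<alpha> \<Longrightarrow> (E ^^ n) y1 = (E ^^ n) y2 \<Longrightarrow> y1 = y2"
proof (induction n arbitrary: y1 y2)
  case 0
  then show ?case by simp
next
  case (Suc n)
  then have "E y1 = E y2"
    by (simp add: Iword_Suc funpow_Suc_right del: funpow.simps)
  then show ?case
    using Suc.prems Icyl_inj by (auto simp: Iword_Suc)
qed

lemma Iword_exists:
  "x \<in> circle \<Longrightarrow> \<forall>i\<in>{1..n}. \<alpha> i < deg \<Longrightarrow> \<exists>y \<in> Iword F n \<alpha>. (E ^^ n) y = x"
proof (induction n)
  case 0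
  then show ?case by (auto simp: Iword_def)
next
  case (Suc n)
  then obtain y' where y': "y' \<in> Iword F n \<alpha>" "(E ^^ n) y' = x"
    by auto
  have "\<alpha> (Suc n) < deg"
    using Suc.prems(2) by simp
  then obtain y where "y \<in> Icyl F (\<alpha> (Suc n))" "E y = y'"
    using Icyl_surj[OF Iword_circle[OF y'(1)]] by blast
  then show ?case
    using y' by (auto simp: Iword_Suc funpow_Suc_right simp del: funpow.simps)
qed

lemma words_less: "\<alpha> \<in> words deg n \<Longrightarrow> \<forall>i\<in>{1..n}. \<alpha> i < deg"
  unfolding words_def by auto

lemma words_finite: "finite (words deg n)"
  unfolding words_def by (simp add: finite_PiE)

lemma card_words: "card (words deg n) = deg ^ n"
  unfolding words_def by (simp add: card_PiE)

lemma xword_spec: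
  assumes "x \<in> circle" "\<alpha> \<in> words deg n"
  shows "xword F n \<alpha> x \<in> Iword F n \<alpha>" and "(E ^^ n) (xword F n \<alpha> x) = x"
proof -
  have "\<exists>!y. y \<in> Iword F n \<alpha> \<and> (E ^^ n) y = x"
    using Iword_exists[OF assms(1) words_less[OF assms(2)]] Iword_unique by blast
  then have "xword F n \<alpha> x \<in> Iword F n \<alpha> \<and> (E ^^ n) (xword F n \<alpha> x) = x"
    unfolding xword_def by (rule theI')
  then show "xword F n \<alpha> x \<in> Iword F n \<alpha>" and "(E ^^ n) (xword F n \<alpha> x) = x"
    by auto
qed

lemma xword_eqI:
  assumes "x \<in> circle" "\<alpha> \<in> words deg n" "y \<in> Iword F n \<alpha>" "(E ^^ n) y = x"
  shows "xword F n \<alpha> x = y"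
  using xword_spec[OF assms(1,2)] assms(3,4) Iword_unique by metis

definition itinerary :: "nat \<Rightarrow> real \<Rightarrow> (nat \<Rightarrow> nat)" where
  "itinerary n y = (\<lambda>i. if i \<in> {1..n} then digit ((E ^^ (n - i)) y) else undefined)"

lemma itinerary_spec:
  assumes "y \<in> circle"
  shows "itinerary n y \<in> words deg n" and "y \<in> Iword F n (itinerary n y)"
proof -
  show "itinerary n y \<in> words deg n"
    unfolding words_def itinerary_def using digit_Icyl funpow_Ecirc_in_circle[OF assms] by auto
  have "(E ^^ i) y \<in> Icyl F (itinerary n y (n - i))" if "i < n" for i
    using that digit_Icyl funpow_Ecirc_in_circle[OF assms] unfolding itinerary_def by auto
  then show "y \<in> Iword F n (itinerary n y)"
    unfolding Iword_def using assms by blast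
qed

lemma Iword_disjoint:
  assumes "\<alpha> \<in> words deg n" "\<alpha>' \<in> words deg n" "y \<in> Iword F n \<alpha>" "y \<in> Iword F n \<alpha>'"
  shows "\<alpha> = \<alpha>'"
proof -
  have "\<alpha> k = \<alpha>' k" if k: "k \<in> {1..n}" for k
  proof -
    have "n - k < n" "n - (n - k) = k"
      using k by auto
    then have "(E ^^ (n - k)) y \<in> Icyl F (\<alpha> k)" "(E ^^ (n - k)) y \<in> Icyl F (\<alpha>' k)"
      using assms(3,4) unfolding Iword_def by (metis (no_types, lifting) mem_Collect_eq)+
    then show ?thesis
      using Icyl_digit by metis
  qed
  then show ?thesis
    using assms(1,2) unfolding words_def by (rule PiE_ext[rotated 2])
qed

definition preimages :: "nat \<Rightarrow> real \<Rightarrow> real set" where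
  "preimages n x = {y \<in> circle. (E ^^ n) y = x}"

lemma xword_bij:
  assumes x: "x \<in> circle"
  shows "bij_betw (\<lambda>\<alpha>. xword F n \<alpha> x) (words deg n) (preimages n x)"
proof (rule bij_betwI')
  fix \<alpha> \<alpha>'
  assume "\<alpha> \<in> words deg n" "\<alpha>' \<in> words deg n"
  then show "(xword F n \<alpha> x = xword F n \<alpha>' x) = (\<alpha> = \<alpha>')"
    using Iword_disjoint xword_spec(1)[OF x] by metis
next
  fix \<alpha>
  assume "\<alpha> \<in> words deg n"
  then show "xword F n \<alpha> x \<in> preimages n x"
    unfolding preimages_def using xword_spec[OF x] Iword_circle by blast
next
  fix y
  assume "y \<in> preimages n x"
  then have y: "y \<in> circle" "(E ^^ n) y = x"
    unfolding preimages_def by auto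
  then have "xword F n (itinerary n y) x = y"
    using xword_eqI[OF x itinerary_spec[OF y(1)]] by blast
  then show "\<exists>\<alpha>\<in>words deg n. y = xword F n \<alpha> x"
    using itinerary_spec(1)[OF y(1)] by metis
qed

lemma preimages_finite: "x \<in> circle \<Longrightarrow> finite (preimages n x)"
  using xword_bij bij_betw_finite words_finite by blast

lemma trunc_words: "\<alpha> \<in> words deg n \<Longrightarrow> q \<le> n \<Longrightarrow> trunc q \<alpha> \<in> words deg q"
  unfolding words_def trunc_def by (auto simp: restrict_PiE_iff)

lemma funpow_xword_trunc:
  assumes x: "x \<in> circle" and \<alpha>: "\<alpha> \<in> words deg n" and q: "q \<le> n"
  shows "(E ^^ (n - q)) (xword F n \<alpha> x) = xword F q (trunc q \<alpha>) x"
proof -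
  define y where "y = xword F n \<alpha> x"
  have y: "y \<in> Iword F n \<alpha>" "(E ^^ n) y = x"
    using xword_spec[OF x \<alpha>] unfolding y_def by auto
  have "(E ^^ i) ((E ^^ (n - q)) y) \<in> Icyl F (trunc q \<alpha> (q - i))" if i: "i < q" for i
  proof -
    have "i + (n - q) < n" "n - (i + (n - q)) = q - i"
      using i q by auto
    then have "(E ^^ (i + (n - q))) y \<in> Icyl F (\<alpha> (q - i))"
      using y(1) unfolding Iword_def by (metis (no_types, lifting) mem_Collect_eq)
    moreover have "1 \<le> q - i"
      using i by simp
    ultimately show ?thesis
      unfolding trunc_def by (simp add: funpow_add)
  qed
  then have "(E ^^ (n - q)) y \<in> Iword F q (trunc q \<alpha>)"
    unfolding Iword_def using funpow_Ecirc_in_circle Iword_circle y(1) by blast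
  moreover have "(E ^^ q) ((E ^^ (n - q)) y) = x"
    using y(2) q funpow_Ecirc_add[of "n - q" q y] by simp
  ultimately show ?thesis
    using xword_eqI[OF x trunc_words[OF \<alpha> q]] unfolding y_def by metis
qed

subsection \<open>The invariant cone\<close>

lemma R_nonneg: "0 \<le> R"
  using tau_deriv_bound[of 0] by linarith

lemma Dfn_lower_triangular:
  "\<exists>a b. a > 0 \<and> (\<forall>w. Dfn F \<tau> n y w = (a * fst w, b * fst w + snd w))"
proof (induction n arbitrary: y)
  case 0
  then show ?case
    by (intro exI[of _ 1] exI[of _ 0]) auto
next
  case (Suc n)
  obtain a b where ab: "a > 0" "\<And>w. Dfn F \<tau> n (E y) w = (a * fst w, b * fst w + snd w)"
    using Suc.IH[of "E y"] by blast
  have "deriv F y > 0"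
    using F_expanding[of y] lam by linarith
  then show ?case
    using ab
    by (intro exI[of _ "a * deriv F y"] exI[of _ "b * deriv F y + deriv \<tau> y"])
      (auto simp: Df_def algebra_simps)
qed

lemma Dfn_scaleR: "Dfn F \<tau> n y (c *\<^sub>R w) = c *\<^sub>R Dfn F \<tau> n y w"
  using Dfn_lower_triangular[of n y] by (cases w) (auto simp: algebra_simps)

lemma Dfn_zero: "Dfn F \<tau> n y 0 = 0"
  using Dfn_scaleR[of n y 0 0] by simp

lemma Dfn_inj:
  assumes "Dfn F \<tau> n y u1 = Dfn F \<tau> n y u2"
  shows "u1 = u2"
proof -
  obtain a b where ab: "a > 0" "\<And>w. Dfn F \<tau> n y w = (a * fst w, b * fst w + snd w)"
    using Dfn_lower_triangular by blast
  then have "a * fst u1 = a * fst u2" "b * fst u1 + snd u1 = b * fst u2 + snd u2"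
    using assms by auto
  then show ?thesis
    using ab(1) by (simp add: prod_eq_iff)
qed

lemma Dfn_add: "Dfn F \<tau> (m + n) y w = Dfn F \<tau> n ((E ^^ m) y) (Dfn F \<tau> m y w)"
  by (induction m arbitrary: y w) (simp_all add: funpow_Suc_right del: funpow.simps)

lemma cone_scaleR:
  assumes "w \<in> cone lam R"
  shows "c *\<^sub>R w \<in> cone lam R"
proof -
  have "\<bar>c\<bar> * \<bar>snd w\<bar> \<le> \<bar>c\<bar> * ((R / (lam - 1)) * \<bar>fst w\<bar>)"
    using assms unfolding cone_def by (intro mult_left_mono) auto
  then show ?thesis
    unfolding cone_def by (simp add: abs_mult algebra_simps)
qed

lemma unit_in_cone: "(1, 0) \<in> cone lam R"
  unfolding cone_def using R_nonneg lam by auto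

lemma Df_cone:
  assumes "w \<in> cone lam R"
  shows "Df F \<tau> y w \<in> cone lam R"
proof -
  define \<theta> where "\<theta> = R / (lam - 1)"
  have \<theta>: "\<theta> \<ge> 0" "\<theta> * (lam - 1) = R"
    using R_nonneg lam unfolding \<theta>_def by auto
  have w: "\<bar>snd w\<bar> \<le> \<theta> * \<bar>fst w\<bar>"
    using assms unfolding cone_def \<theta>_def by auto
  have "\<bar>deriv \<tau> y * fst w + snd w\<bar> \<le> \<bar>deriv \<tau> y\<bar> * \<bar>fst w\<bar> + \<bar>snd w\<bar>"
    by (metis abs_mult abs_triangle_ineq)
  also have "\<dots> \<le> R * \<bar>fst w\<bar> + \<theta> * \<bar>fst w\<bar>"
    using tau_deriv_bound[of y] w by (intro add_mono mult_right_mono) auto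
  also have "\<dots> = \<theta> * lam * \<bar>fst w\<bar>"
    using \<theta> by (simp add: algebra_simps)
  also have "\<dots> \<le> \<theta> * deriv F y * \<bar>fst w\<bar>"
    using F_expanding[of y] \<theta>(1) by (intro mult_right_mono mult_left_mono) auto
  also have "\<dots> = \<theta> * \<bar>deriv F y * fst w\<bar>"
    using F_expanding[of y] lam by (simp add: abs_mult)
  finally show ?thesis
    unfolding cone_def Df_def \<theta>_def by simp
qed

lemma Dfn_cone: "w \<in> cone lam R \<Longrightarrow> Dfn F \<tau> n y w \<in> cone lam R"
  by (induction n arbitrary: y w) (auto simp: Df_cone)

lemma cone_image_scaleR:
  assumes "v \<in> cone_image F \<tau> lam R n y"
  shows "c *\<^sub>R v \<in> cone_image F \<tau> lam R n y"
proof -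
  obtain w where "w \<in> cone lam R" "v = Dfn F \<tau> n y w"
    using assms unfolding cone_image_def by auto
  then have "c *\<^sub>R w \<in> cone lam R" "c *\<^sub>R v = Dfn F \<tau> n y (c *\<^sub>R w)"
    by (simp_all add: cone_scaleR Dfn_scaleR)
  then show ?thesis
    unfolding cone_image_def by blast
qed

lemma cone_image_add:
  "v \<in> cone_image F \<tau> lam R (m + n) y \<Longrightarrow>
     \<exists>u \<in> cone_image F \<tau> lam R m y. v = Dfn F \<tau> n ((E ^^ m) y) u"
  unfolding cone_image_def by (auto simp: Dfn_add)

subsection \<open>Submultiplicativity of the cone count\<close>

definition cone_preimages :: "nat \<Rightarrow> real \<Rightarrow> real \<times> real \<Rightarrow> real set" where
  "cone_preimages n x v = {y \<in> preimages n x. v \<in> cone_image F \<tau> lam R n y}"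

lemma cone_preimages_finite: "x \<in> circle \<Longrightarrow> finite (cone_preimages n x v)"
  unfolding cone_preimages_def using preimages_finite by simp

lemma fskew_funpow:
  "t \<in> circle \<Longrightarrow> (fskew F \<tau> ^^ n) (y, t) = ((E ^^ n) y, frac (t + (\<Sum>i<n. \<tau> ((E ^^ i) y))))"
  by (induction n) (simp_all add: circle_def fskew_def algebra_simps)

lemma card_torus_fibre:
  assumes x: "x \<in> circle" and s: "s \<in> circle"
  shows "card {\<zeta> \<in> torus. (fskew F \<tau> ^^ n) \<zeta> = (x, s) \<and> v \<in> cone_image F \<tau> lam R n (fst \<zeta>)}
       = card (cone_preimages n x v)"
proof -
  define Q where
    "Q = {\<zeta> \<in> torus. (fskew F \<tau> ^^ n) \<zeta> = (x, s) \<and> v \<in> cone_image F \<tau> lam R n (fst \<zeta>)}"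
  define S where "S y = (\<Sum>i<n. \<tau> ((E ^^ i) y))" for y
  have Q: "(y, t) \<in> Q \<longleftrightarrow> y \<in> cone_preimages n x v \<and> t \<in> circle \<and> frac (t + S y) = s" for y t
    unfolding Q_def torus_def S_def cone_preimages_def preimages_def
    using fskew_funpow[of t n y] by auto
  have "inj_on fst Q"
  proof (rule inj_onI)
    fix z1 z2
    assume z: "z1 \<in> Q" "z2 \<in> Q" "fst z1 = fst z2"
    obtain y t1 t2 where zz: "z1 = (y, t1)" "z2 = (y, t2)"
      using z(3) by (metis prod.collapse)
    have t: "t1 \<in> circle" "t2 \<in> circle" "frac (t1 + S y) = frac (t2 + S y)"
      using z(1,2) Q unfolding zz by auto
    obtain k where k: "t1 + S y = t2 + S y + of_int k"
      using frac_eqE[OF t(3)] by blast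
    have "\<bar>of_int k\<bar> < (1::real)"
      using t(1,2) k unfolding circle_def by auto
    then show "z1 = z2"
      using k zz by simp
  qed
  moreover have "fst ` Q = cone_preimages n x v"
  proof (intro set_eqI iffI)
    fix y
    assume "y \<in> fst ` Q"
    then show "y \<in> cone_preimages n x v"
      using Q by force
  next
    fix y
    assume y: "y \<in> cone_preimages n x v"
    have "frac (s - S y) \<in> circle" "frac (frac (s - S y) + S y) = s"
      using s by (simp_all add: circle_def frac_lt_1)
    then have "(y, frac (s - S y)) \<in> Q"
      using Q y by blast
    then show "y \<in> fst ` Q"
      by force
  qed
  ultimately show ?thesis
    unfolding Q_def[symmetric] by (metis card_image)
qed

abbreviation "Nc n \<equiv> Ncount F \<tau> lam R n"

definition cone_counts :: "nat \<Rightarrow> real set" where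
  "cone_counts n = {real (card (cone_preimages n x v)) | x v. x \<in> circle \<and> norm v = 1}"

lemma zero_in_circle: "(0::real) \<in> circle"
  unfolding circle_def by auto

lemma Ncount_eq_Sup: "Nc n = Sup (cone_counts n)"
proof -
  let ?count = "\<lambda>z v. real (card {\<zeta> \<in> torus. (fskew F \<tau> ^^ n) \<zeta> = z \<and>
    v \<in> cone_image F \<tau> lam R n (fst \<zeta>)})"
  have "{?count z v | z v. z \<in> torus \<and> norm v = 1} = cone_counts n"
  proof (intro set_eqI iffI)
    fix c
    assume "c \<in> {?count z v | z v. z \<in> torus \<and> norm v = 1}"
    then obtain x s v where xsv: "c = ?count (x, s) v" "x \<in> circle" "s \<in> circle" "norm v = 1"
      unfolding torus_def by auto
    then have "c = real (card (cone_preimages n x v))"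
      using card_torus_fibre by simp
    then show "c \<in> cone_counts n"
      unfolding cone_counts_def using xsv(2,4) by blast
  next
    fix c
    assume "c \<in> cone_counts n"
    then obtain x v where xv: "c = real (card (cone_preimages n x v))" "x \<in> circle" "norm v = 1"
      unfolding cone_counts_def by auto
    then have "c = ?count (x, 0) v" "(x, 0) \<in> torus"
      using card_torus_fibre[OF xv(2) zero_in_circle] zero_in_circle by (simp_all add: torus_def)
    then show "c \<in> {?count z v | z v. z \<in> torus \<and> norm v = 1}"
      using xv(3) by blast
  qed
  then show ?thesis
    unfolding Ncount_def by simp
qed

lemma cone_counts_finite: "finite (cone_counts n)"
proof -
  have "cone_counts n \<subseteq> real ` {..card (words deg n)}"
  proof
    fix c
    assume "c \<in> cone_counts n"
    then obtain x v where xv: "c = real (card (cone_preimages n x v))" "x \<in> circle"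
      unfolding cone_counts_def by auto
    have "card (cone_preimages n x v) \<le> card (preimages n x)"
      using preimages_finite[OF xv(2)] by (auto simp: cone_preimages_def intro: card_mono)
    also have "\<dots> = card (words deg n)"
      using bij_betw_same_card[OF xword_bij[OF xv(2)]] by simp
    finally show "c \<in> real ` {..card (words deg n)}"
      using xv(1) by auto
  qed
  then show ?thesis
    using finite_subset by blast
qed

lemma cone_counts_nonempty: "cone_counts n \<noteq> {}"
proof -
  have "norm ((1, 0) :: real \<times> real) = 1"
    by simp
  then show ?thesis
    unfolding cone_counts_def using zero_in_circle by blast
qed

lemma card_cone_preimages_le_Ncount:
  "x \<in> circle \<Longrightarrow> norm v = 1 \<Longrightarrow> real (card (cone_preimages n x v)) \<le> Nc n"
  unfolding Ncount_eq_Sup cone_counts_def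
  by (rule cSup_upper[OF _ bdd_above_finite[OF cone_counts_finite[unfolded cone_counts_def]]]) blast

lemma Ncount_attained: "\<exists>x v. x \<in> circle \<and> norm v = 1 \<and> Nc n = real (card (cone_preimages n x v))"
proof -
  have "Sup (cone_counts n) \<in> cone_counts n"
    using cone_counts_finite cone_counts_nonempty by (simp add: cSup_eq_Max)
  then show ?thesis
    unfolding Ncount_eq_Sup cone_counts_def by auto
qed

lemma unit_in_cone_image: "\<exists>v. norm v = 1 \<and> v \<in> cone_image F \<tau> lam R n y"
proof -
  define w where "w = Dfn F \<tau> n y (1, 0)"
  have "w \<noteq> 0"
    using Dfn_inj[of n y "(1, 0)" 0] Dfn_zero unfolding w_def by (auto simp: zero_prod_def)
  moreover have "w \<in> cone_image F \<tau> lam R n y"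
    unfolding w_def cone_image_def using unit_in_cone by blast
  ultimately show ?thesis
    using cone_image_scaleR[of w n y "1 / norm w"] by (intro exI[of _ "(1 / norm w) *\<^sub>R w"]) simp
qed

lemma Ncount_ge_1: "1 \<le> Nc n"
proof -
  obtain v where v: "norm v = 1" "v \<in> cone_image F \<tau> lam R n 0"
    using unit_in_cone_image by blast
  let ?x = "(E ^^ n) 0"
  have x: "?x \<in> circle"
    using funpow_Ecirc_in_circle[OF zero_in_circle] .
  have "0 \<in> cone_preimages n ?x v"
    unfolding cone_preimages_def preimages_def using zero_in_circle v by auto
  then have "1 \<le> card (cone_preimages n ?x v)"
    using cone_preimages_finite[OF x] by (metis One_nat_def Suc_leI card_gt_0_iff empty_iff)
  then show ?thesis
    using card_cone_preimages_le_Ncount[OF x v(1), of n] by linarith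
qed

lemma card_cone_preimages_fibre_le:
  assumes x: "x \<in> circle" and v: "norm v = 1" and w: "w \<in> circle"
  shows "real (card {y \<in> cone_preimages (m + n) x v. (E ^^ m) y = w}) \<le> Nc m"
proof (cases "{y \<in> cone_preimages (m + n) x v. (E ^^ m) y = w} = {}")
  case True
  then show ?thesis
    by (subst True) (use Ncount_ge_1[of m] in simp)
next
  case False
  then obtain y0 where y0: "y0 \<in> cone_preimages (m + n) x v" "(E ^^ m) y0 = w"
    by blast
  then obtain u0 where u0: "u0 \<in> cone_image F \<tau> lam R m y0" "v = Dfn F \<tau> n w u0"
    using cone_image_add unfolding cone_preimages_def by blast
  have "u0 \<noteq> 0"
    using u0(2) v Dfn_zero by auto
  define v' where "v' = (1 / norm u0) *\<^sub>R u0"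
  have v': "norm v' = 1"
    using \<open>u0 \<noteq> 0\<close> unfolding v'_def by simp
  \<comment> \<open>\<open>Df\<^sup>n(w)\<close> is injective, so every such \<open>y\<close> carries the same intermediate vector \<open>u0\<close>.\<close>
  have "{y \<in> cone_preimages (m + n) x v. (E ^^ m) y = w} \<subseteq> cone_preimages m w v'"
  proof
    fix y
    assume y: "y \<in> {y \<in> cone_preimages (m + n) x v. (E ^^ m) y = w}"
    then obtain u where "u \<in> cone_image F \<tau> lam R m y" "v = Dfn F \<tau> n w u"
      using cone_image_add unfolding cone_preimages_def by blast
    then have "u0 \<in> cone_image F \<tau> lam R m y"
      using u0(2) Dfn_inj by metis
    then show "y \<in> cone_preimages m w v'"
      using y cone_image_scaleR unfolding v'_def cone_preimages_def preimages_def by auto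
  qed
  then have "card {y \<in> cone_preimages (m + n) x v. (E ^^ m) y = w} \<le> card (cone_preimages m w v')"
    by (rule card_mono[OF cone_preimages_finite[OF w]])
  then show ?thesis
    using card_cone_preimages_le_Ncount[OF w v', of m] by linarith
qed

lemma funpow_cone_preimages:
  assumes "y \<in> cone_preimages (m + n) x v"
  shows "(E ^^ m) y \<in> cone_preimages n x v"
proof -
  obtain u where "u \<in> cone_image F \<tau> lam R m y" "v = Dfn F \<tau> n ((E ^^ m) y) u"
    using assms cone_image_add unfolding cone_preimages_def by blast
  then have "v \<in> cone_image F \<tau> lam R n ((E ^^ m) y)"
    unfolding cone_image_def using Dfn_cone by blast
  then show ?thesis
    using assms funpow_Ecirc_in_circle
    unfolding cone_preimages_def preimages_def by (auto simp: funpow_Ecirc_add)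
qed

lemma Ncount_submult: "Nc (m + n) \<le> Nc m * Nc n"
proof -
  obtain x v where x: "x \<in> circle" and v: "norm v = 1"
    and attained: "Nc (m + n) = real (card (cone_preimages (m + n) x v))"
    using Ncount_attained by blast
  have "Nc (m + n) \<le> (\<Sum>w\<in>cone_preimages n x v.
      real (card {y \<in> cone_preimages (m + n) x v. (E ^^ m) y = w}))"
    unfolding attained
    by (rule card_le_sum_card_fibres[OF cone_preimages_finite[OF x] funpow_cone_preimages])
  also have "\<dots> \<le> real (card (cone_preimages n x v)) * Nc m"
    by (rule sum_bounded_above)
      (use card_cone_preimages_fibre_le[OF x v] in \<open>simp add: cone_preimages_def preimages_def\<close>)
  also have "\<dots> \<le> Nc n * Nc m"
    using card_cone_preimages_le_Ncount[OF x v] Ncount_ge_1[of m] by (intro mult_right_mono) auto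
  finally show ?thesis
    by (simp add: mult.commute)
qed

subsection \<open>Derivatives of \<open>E\<^sup>n\<close>\<close>

lemma Fpow_has_derivative:
  "\<exists>d. (F ^^ n has_real_derivative d) (at y) \<and> lam ^ n \<le> d \<and> d \<le> \<Lambda> ^ n"
proof (induction n arbitrary: y)
  case 0
  show ?case
    using DERIV_ident by (intro exI[of _ 1]) (simp add: id_def)
next
  case (Suc n)
  obtain d where d: "(F ^^ n has_real_derivative d) (at (F y))" "lam ^ n \<le> d" "d \<le> \<Lambda> ^ n"
    using Suc.IH[of "F y"] by blast
  have "0 \<le> d"
    using d(2) lam by (smt (verit) zero_le_power)
  have "(F ^^ Suc n has_real_derivative d * deriv F y) (at y)"
    using DERIV_chain[OF d(1) F_deriv] by (simp only: funpow_Suc_right)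
  moreover have "lam ^ Suc n \<le> d * deriv F y" "d * deriv F y \<le> \<Lambda> ^ Suc n"
    unfolding power_Suc2 using d(2,3) F_expanding[of y] lam \<open>0 \<le> d\<close>
    by (auto intro!: mult_mono)
  ultimately show ?case
    by blast
qed

lemma deriv_Fpow_bounds: "lam ^ n \<le> deriv (F ^^ n) y \<and> deriv (F ^^ n) y \<le> \<Lambda> ^ n"
  using Fpow_has_derivative[of n y] DERIV_imp_deriv by metis

lemma lam_le_Lambda: "lam \<le> \<Lambda>"
  using F_expanding[of 0] by auto

lemma cover_index_nonempty:
  fixes J :: nat
  assumes "{ln lam..ln \<Lambda>} \<subseteq> (\<Union>j\<in>{1..J}. {a j<..<b j})"
  shows "J \<ge> 1"
proof -
  have "ln lam \<in> {ln lam..ln \<Lambda>}"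
    using lam lam_le_Lambda by simp
  then obtain j where "j \<in> {1..J}"
    using assms by blast
  then show ?thesis
    by simp
qed

lemma deriv_Fpow_in_cover:
  fixes J :: nat
  assumes cover: "{ln lam..ln \<Lambda>} \<subseteq> (\<Union>j\<in>{1..J}. {a j<..<b j})" and n: "n \<ge> 1"
  shows "\<exists>j\<in>{1..J}. deriv (F ^^ n) y \<in> {exp (a j * real n)..exp (b j * real n)}"
proof -
  define d where "d = deriv (F ^^ n) y"
  have lam_pos: "0 < lam" and Lambda_pos: "0 < \<Lambda>"
    using lam lam_le_Lambda by auto
  have d: "lam ^ n \<le> d" "d \<le> \<Lambda> ^ n"
    using deriv_Fpow_bounds unfolding d_def by auto
  then have d_pos: "0 < d"
    using lam_pos by (meson less_le_trans zero_less_power)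
  have "ln (lam ^ n) \<le> ln d" "ln d \<le> ln (\<Lambda> ^ n)"
    using d d_pos lam_pos Lambda_pos by simp_all
  then have "real n * ln lam \<le> ln d" "ln d \<le> real n * ln \<Lambda>"
    using lam_pos Lambda_pos by (simp_all add: ln_realpow)
  then have "ln d / real n \<in> {ln lam..ln \<Lambda>}"
    using n by (simp add: field_simps)
  then obtain j where j: "j \<in> {1..J}" "a j < ln d / real n" "ln d / real n < b j"
    using cover by auto
  then have "a j * real n \<le> ln d" "ln d \<le> b j * real n"
    using n by (simp_all add: field_simps)
  then have "exp (a j * real n) \<le> d" "d \<le> exp (b j * real n)"
    using d_pos by (metis exp_le_cancel_iff exp_ln)+
  then show ?thesis
    using j(1) unfolding d_def by auto
qed

subsection \<open>Words with a prescribed prefix\<close>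

definition cone_words :: "nat \<Rightarrow> real \<Rightarrow> real \<times> real \<Rightarrow> (nat \<Rightarrow> nat) set" where
  "cone_words n x v = {\<alpha> \<in> words deg n. v \<in> cone_image F \<tau> lam R n (xword F n \<alpha> x)}"

lemma cone_words_finite: "finite (cone_words n x v)"
  unfolding cone_words_def using words_finite by simp

lemma card_cone_words:
  assumes x: "x \<in> circle"
  shows "card (cone_words n x v) = card (cone_preimages n x v)"
proof -
  let ?f = "\<lambda>\<alpha>. xword F n \<alpha> x"
  have bij: "bij_betw ?f (words deg n) (preimages n x)"
    by (rule xword_bij[OF x])
  have "inj_on ?f (cone_words n x v)"
    by (rule inj_on_subset[OF bij_betw_imp_inj_on[OF bij]]) (auto simp: cone_words_def)
  moreover have "?f ` cone_words n x v = {y \<in> ?f ` words deg n. v \<in> cone_image F \<tau> lam R n y}"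
    unfolding cone_words_def by blast
  then have "?f ` cone_words n x v = cone_preimages n x v"
    unfolding cone_preimages_def by (simp only: bij_betw_imp_surj_on[OF bij])
  ultimately show ?thesis
    by (metis card_image)
qed

lemma card_cone_words_prefix_le:
  assumes x: "x \<in> circle" and v: "norm v = 1" and \<beta>: "\<beta> \<in> words deg q" and q: "q \<le> n"
  shows "real (card {\<alpha> \<in> cone_words n x v. trunc q \<alpha> = \<beta>}) \<le> Nc (n - q)"
proof -
  let ?f = "\<lambda>\<alpha>. xword F n \<alpha> x"
  let ?A = "{\<alpha> \<in> cone_words n x v. trunc q \<alpha> = \<beta>}"
  define w where "w = xword F q \<beta> x"
  let ?fibre = "{y \<in> cone_preimages (n - q + q) x v. (E ^^ (n - q)) y = w}"
  have w: "w \<in> circle"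
    using xword_spec(1)[OF x \<beta>] Iword_circle unfolding w_def by blast
  have "inj_on ?f ?A"
    by (rule inj_on_subset[OF bij_betw_imp_inj_on[OF xword_bij[OF x]]]) (auto simp: cone_words_def)
  moreover have "?f ` ?A \<subseteq> ?fibre"
  proof
    fix y
    assume "y \<in> ?f ` ?A"
    then obtain \<alpha> where \<alpha>: "\<alpha> \<in> words deg n" "v \<in> cone_image F \<tau> lam R n (?f \<alpha>)"
      "trunc q \<alpha> = \<beta>" "y = ?f \<alpha>"
      unfolding cone_words_def by auto
    then show "y \<in> ?fibre"
      using q xword_spec[OF x \<alpha>(1)] Iword_circle funpow_xword_trunc[OF x \<alpha>(1) q]
      unfolding cone_preimages_def preimages_def w_def by auto
  qed
  moreover have "finite ?fibre"
    using cone_preimages_finite[OF x] by simp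
  ultimately have "card ?A \<le> card ?fibre"
    by (rule card_inj_on_le)
  then show ?thesis
    using card_cone_preimages_fibre_le[OF x v w, of "n - q" q] by linarith
qed

lemma cone_words_derivative_class:
  assumes cover: "{ln lam..ln \<Lambda>} \<subseteq> (\<Union>j\<in>{1..J}. {a j<..<b j})" and n: "n \<ge> 1"
  shows "\<exists>j\<in>{1..J}. real (card (cone_words n x v)) / real J \<le> real (card
    {\<alpha> \<in> cone_words n x v. deriv (F ^^ n) (xword F n \<alpha> x) \<in> {exp (a j * real n)..exp (b j * real n)}})"
proof -
  let ?S = "cone_words n x v"
  let ?class = "\<lambda>j. {\<alpha> \<in> ?S. deriv (F ^^ n) (xword F n \<alpha> x) \<in> {exp (a j * real n)..exp (b j * real n)}}"
  have "?S \<subseteq> (\<Union>j\<in>{1..J}. ?class j)"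
    using deriv_Fpow_in_cover[OF cover n] by blast
  then have "card ?S \<le> card (\<Union>j\<in>{1..J}. ?class j)"
    using cone_words_finite by (intro card_mono) auto
  also have "\<dots> \<le> (\<Sum>j\<in>{1..J}. card (?class j))"
    by (rule card_UN_le) simp
  finally have "real (card ?S) \<le> (\<Sum>j\<in>{1..J}. real (card (?class j)))"
    by (simp only: of_nat_sum[symmetric] of_nat_le_iff)
  moreover have "{1..J} \<noteq> {}"
    using cover_index_nonempty[OF cover] by simp
  ultimately show ?thesis
    using exists_ge_average[of "{1..J}"] by simp
qed

lemma prefix_family_of_jump:
  fixes J q K n :: nat and a b :: "nat \<Rightarrow> real" and \<rho> :: real
  assumes cover: "{ln lam..ln \<Lambda>} \<subseteq> (\<Union>j\<in>{1..J}. {a j<..<b j})"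
    and q_large: "4 * real J * real (q + 1) * real K < exp (real q * \<rho> / 2)"
    and lower: "exp (\<rho> * real n) \<le> Nc n"
    and n: "q \<le> n" "1 \<le> n"
    and jump: "exp (real q * \<rho> / 2) * Nc (n - q) < Nc n"
  shows "\<exists>x s v0 j B \<Sigma>. x \<in> circle \<and> s \<in> circle \<and> norm (v0 :: real \<times> real) = 1 \<and>
        j \<in> {1..J} \<and> B \<subseteq> words deg q \<and> card B = 2 * (q + 1) * K \<and>
        (\<forall>\<beta>\<in>B. \<Sigma> \<beta> \<subseteq> words deg n \<and>
           real (card (\<Sigma> \<beta>)) \<ge> exp (\<rho> * real n) / real deg ^ q / (2 * real J) \<and>
           (\<forall>\<alpha>\<in>\<Sigma> \<beta>. trunc q \<alpha> = \<beta> \<and>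
              v0 \<in> cone_image F \<tau> lam R n (xword F n \<alpha> x) \<and>
              deriv (F ^^ n) (xword F n \<alpha> x) \<in> {exp (a j * real n)..exp (b j * real n)}))"
proof -
  obtain x v where x: "x \<in> circle" and v: "norm v = 1"
    and attained: "Nc n = real (card (cone_preimages n x v))"
    using Ncount_attained by blast
  have J: "real J > 0"
    using cover_index_nonempty[OF cover] by simp
  define level_class where "level_class j = {\<alpha> \<in> cone_words n x v.
      deriv (F ^^ n) (xword F n \<alpha> x) \<in> {exp (a j * real n)..exp (b j * real n)}}" for j
  obtain j where j: "j \<in> {1..J}" and class_large: "Nc n / real J \<le> real (card (level_class j))"
    using cone_words_derivative_class[OF cover n(2), of x v] card_cone_words[OF x] attained
    unfolding level_class_def by auto
  define \<Sigma> where "\<Sigma> \<beta> = {\<alpha> \<in> level_class j. trunc q \<alpha> = \<beta>}" for \<beta>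
  define T where "T = exp (\<rho> * real n) / real deg ^ q / (2 * real J)"
  have "2 * (q + 1) * K < card {\<beta> \<in> words deg q. T \<le> real (card (\<Sigma> \<beta>))}"
  proof (rule many_large_values[where M = "Nc (n - q)" and s = "Nc n / real J"])
    show "real (card (\<Sigma> \<beta>)) \<le> Nc (n - q)" if "\<beta> \<in> words deg q" for \<beta>
    proof -
      have "card (\<Sigma> \<beta>) \<le> card {\<alpha> \<in> cone_words n x v. trunc q \<alpha> = \<beta>}"
        unfolding \<Sigma>_def level_class_def by (rule card_mono) (auto simp: cone_words_finite)
      then show ?thesis
        using card_cone_words_prefix_le[OF x v that n(1)] by linarith
    qed
    show "Nc n / real J \<le> (\<Sum>\<beta>\<in>words deg q. real (card (\<Sigma> \<beta>)))"
      using class_large card_le_sum_card_fibres[OF words_finite, of "level_class j" "trunc q"]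
        trunc_words n(1) unfolding \<Sigma>_def level_class_def cone_words_def by fastforce
    have "real (card (words deg q)) * T = exp (\<rho> * real n) / (2 * real J)"
      unfolding card_words T_def using deg_pos by (simp add: field_simps)
    also have "\<dots> \<le> Nc n / (2 * real J)"
      using lower J by (simp add: divide_right_mono)
    finally show "real (card (words deg q)) * T \<le> Nc n / real J / 2"
      by simp
    have "2 * real (2 * (q + 1) * K) * Nc (n - q) * real J
        = (4 * real J * real (q + 1) * real K) * Nc (n - q)"
      by (simp add: algebra_simps)
    also have "\<dots> < exp (real q * \<rho> / 2) * Nc (n - q)"
      using q_large Ncount_ge_1[of "n - q"] by (intro mult_strict_right_mono) auto
    also have "\<dots> < Nc n"
      by (rule jump)
    finally show "2 * real (2 * (q + 1) * K) * Nc (n - q) < Nc n / real J"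
      using J by (simp add: pos_less_divide_eq)
  qed (use words_finite Ncount_ge_1[of "n - q"] J in \<open>simp_all add: T_def\<close>)
  then obtain B where B: "B \<subseteq> {\<beta> \<in> words deg q. T \<le> real (card (\<Sigma> \<beta>))}"
    "card B = 2 * (q + 1) * K"
    by (meson less_imp_le obtain_subset_with_card_n)
  show ?thesis
  proof (intro exI conjI)
    show "x \<in> circle" "0 \<in> circle" "norm v = 1" "j \<in> {1..J}" "card B = 2 * (q + 1) * K"
      using x zero_in_circle v j B(2) .
    show "B \<subseteq> words deg q"
      using B(1) by auto
    show "\<forall>\<beta>\<in>B. \<Sigma> \<beta> \<subseteq> words deg n \<and>
           real (card (\<Sigma> \<beta>)) \<ge> exp (\<rho> * real n) / real deg ^ q / (2 * real J) \<and>
           (\<forall>\<alpha>\<in>\<Sigma> \<beta>. trunc q \<alpha> = \<beta> \<and>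
              v \<in> cone_image F \<tau> lam R n (xword F n \<alpha> x) \<and>
              deriv (F ^^ n) (xword F n \<alpha> x) \<in> {exp (a j * real n)..exp (b j * real n)})"
      using B(1) unfolding T_def \<Sigma>_def level_class_def cone_words_def by auto
  qed
qed

lemma infinitely_many_prefix_families:
  fixes J q K :: nat and a b :: "nat \<Rightarrow> real" and \<rho> :: real
  assumes cover: "{ln lam..ln \<Lambda>} \<subseteq> (\<Union>j\<in>{1..J}. {a j<..<b j})"
    and q_large: "4 * real J * real (q + 1) * real K < exp (real q * \<rho> / 2)"
    and q: "q > 0" and \<rho>: "\<rho> > 0" and growth: "Ntau F \<tau> lam R \<ge> exp \<rho>"
  shows "infinite {n. q \<le> n \<and>
     (\<exists>x s v0 j B \<Sigma>. x \<in> circle \<and> s \<in> circle \<and> norm (v0 :: real \<times> real) = 1 \<and>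
        j \<in> {1..J} \<and> B \<subseteq> words deg q \<and> card B = 2 * (q + 1) * K \<and>
        (\<forall>\<beta>\<in>B. \<Sigma> \<beta> \<subseteq> words deg n \<and>
           real (card (\<Sigma> \<beta>)) \<ge> exp (\<rho> * real n) / real deg ^ q / (2 * real J) \<and>
           (\<forall>\<alpha>\<in>\<Sigma> \<beta>. trunc q \<alpha> = \<beta> \<and>
              v0 \<in> cone_image F \<tau> lam R n (xword F n \<alpha> x) \<and>
              deriv (F ^^ n) (xword F n \<alpha> x) \<in> {exp (a j * real n)..exp (b j * real n)})))}"
    (is "infinite ?S")
  unfolding infinite_nat_iff_unbounded_le
proof
  fix m
  have lower: "exp (\<rho> * real n) \<le> Nc n" if "n \<ge> 1" for n
    using growth that unfolding Ntau_def
    by (intro submultiplicative_exp_lower_bound[of "\<lambda>n. Nc n"] Ncount_ge_1 Ncount_submult)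
  obtain n where n: "n \<ge> max m (max q 1)" "exp (real q * \<rho> / 2) * Nc (n - q) < Nc n"
    using exp_growth_frequent_jumps[OF q \<rho> lower] by blast
  then have "m \<le> n" "q \<le> n" "1 \<le> n"
    by auto
  moreover have "n \<in> ?S"
    using prefix_family_of_jump[OF cover q_large lower[of n] _ _ n(2)] \<open>q \<le> n\<close> \<open>1 \<le> n\<close>
    by blast
  ultimately show "\<exists>n\<ge>m. n \<in> ?S"
    by blast
qed

end

lemma expanding_skew_of_C_k:
  assumes r: "r \<ge> 1" and deg: "deg \<ge> 1" and F: "C_k r F"
    and F_lift: "\<And>x. F (x + 1) = F x + real deg" and F_fix: "F 0 = 0"
    and lam: "1 < lam" and F_exp: "\<And>x. lam \<le> deriv F x \<and> deriv F x \<le> \<Lambda>"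
    and \<tau>: "C_k r \<tau>" and \<tau>_per: "\<And>x. \<tau> (x + 1) = \<tau> x" and R: "(SUP x. \<bar>deriv \<tau> x\<bar>) \<le> R"
  shows "expanding_skew F \<tau> deg lam \<Lambda> R"
proof
  show "(F has_real_derivative deriv F x) (at x)" for x
    by (rule C_k_has_real_derivative(1)[OF F r])
  show "\<bar>deriv \<tau> x\<bar> \<le> R" for x
    using periodic_C_k_abs_deriv_le_SUP[OF \<tau> r \<tau>_per, of x] R by linarith
qed (use deg F_lift F_fix lam F_exp in auto)

theorem proposition3p3:
  fixes F \<tau> :: "real \<Rightarrow> real" and r deg :: nat and lam \<Lambda> R \<rho> :: real
    and J :: nat and a b :: "nat \<Rightarrow> real" and q :: nat
  assumes r: "r \<ge> 2"
    and deg: "deg \<ge> 2"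
    and F_Cr: "C_k r F"
    and F_lift: "\<And>x. F (x + 1) = F x + real deg"
    and F_fix: "F 0 = 0"
    and lam: "1 < lam"
    and F_exp: "\<And>x. lam \<le> deriv F x \<and> deriv F x \<le> \<Lambda>"
    and tau_Cr: "C_k r \<tau>"
    and tau_per: "\<And>x. \<tau> (x + 1) = \<tau> x"
    and R: "R > (SUP x. \<bar>deriv \<tau> x\<bar>)"
    and rho: "\<rho> > 0"
    and cover: "{ln lam..ln \<Lambda>} \<subseteq> (\<Union>j\<in>{1..J}. {a j<..<b j})"
    and short: "\<And>j. j \<in> {1..J} \<Longrightarrow> b j - a j < \<rho> / 3"
    and q_pos: "q > 0"
    and q1: "real (q + 1) * real (nat \<lceil>6 / \<rho> * ln (real_of_int \<lceil>2 * \<Lambda>\<rceil>)\<rceil>)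
               * exp (- (real q * \<rho> / 2)) < 1 / (4 * real J)"
    and q2: "real deg ^ q \<ge> 2 * real (q + 1) * real (nat \<lceil>6 / \<rho> * ln (real_of_int \<lceil>2 * \<Lambda>\<rceil>)\<rceil>)"
    and Nbig: "Ntau F \<tau> lam R \<ge> exp \<rho>"
  shows "infinite {n. q \<le> n \<and>
     (\<exists>x s v0 j B \<Sigma>. x \<in> circle \<and> s \<in> circle \<and> norm (v0 :: real \<times> real) = 1 \<and>
        j \<in> {1..J} \<and> B \<subseteq> words deg q \<and>
        card B = 2 * (q + 1) * nat \<lceil>6 / \<rho> * ln (real_of_int \<lceil>2 * \<Lambda>\<rceil>)\<rceil> \<and>
        (\<forall>\<beta>\<in>B. \<Sigma> \<beta> \<subseteq> words deg n \<and>
           real (card (\<Sigma> \<beta>)) \<ge> exp (\<rho> * real n) / real deg ^ q / (2 * real J) \<and>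
           (\<forall>\<alpha>\<in>\<Sigma> \<beta>. trunc q \<alpha> = \<beta> \<and>
              v0 \<in> cone_image F \<tau> lam R n (xword F n \<alpha> x) \<and>
              deriv (F ^^ n) (xword F n \<alpha> x) \<in> {exp (a j * real n)..exp (b j * real n)})))}"
proof -
  let ?K = "nat \<lceil>6 / \<rho> * ln (real_of_int \<lceil>2 * \<Lambda>\<rceil>)\<rceil>"
  interpret expanding_skew F \<tau> deg lam \<Lambda> R
    by (rule expanding_skew_of_C_k[of r]) (use r deg F_Cr F_lift F_fix lam F_exp tau_Cr tau_per R in auto)
  have J: "real J > 0"
    using cover_index_nonempty[OF cover] by simp
  have "real (q + 1) * real ?K * (4 * real J) < exp (real q * \<rho> / 2)"
    using q1 J by (simp add: exp_minus field_simps)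
  then have "4 * real J * real (q + 1) * real ?K < exp (real q * \<rho> / 2)"
    by (simp only: ac_simps)
  then show ?thesis
    by (rule infinitely_many_prefix_families[OF cover _ q_pos rho Nbig])
qed

end
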